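(* Non-determinism of a KAT expression is witnessed by a finite interpretation: if $e\in\mathsf{KAT}(\Sigma,T)$ is not deterministic, then there exist a finite set $S$, $\tau:T\to2^S$ and $\sigma:\Sigma\to2^{S\times S}$ such that $\sigma(p)$ is the graph of a partial function for every $p\in\Sigma$ but $\mathcal{R}[\![e]\!]^\sigma_\tau$ is not the graph of a partial function.
   Context: For finite $T$ (tests), $\Sigma$ (actions): $\mathsf{BA}(T)$: $b::=\mathsf{false}\mid\mathsf{true}\mid t\in T\mid b\vee c\mid b\wedge c\mid\overline b$; $\mathsf{KAT}(\Sigma,T)$: $e::=b\mid p\in\Sigma\mid e+f\mid e\cdot f\mid e^*$. Relational semantics for a set $S$, $\tau:T\to2^S$, $\sigma:\Sigma\to2^{S\times S}$: tests denote subsets $[\![b]\!]_\tau$ (Boolean), $\mathcal{R}[\![b]\!]=\{\langle s,s\rangle:s\in[\![b]\!]_\tau\}$, $\mathcal{R}[\![p]\!]=\sigma(p)$, $\mathcal{R}[\![e+f]\!]=\mathcal{R}[\![e]\!]\cup\mathcal{R}[\![f]\!]$, $\mathcal{R}[\![ef]\!]=\mathcal{R}[\![e]\!]\circ\mathcal{R}[\![f]\!]$ (first $e$, then $f$), $\mathcal{R}[\![e^*]\!]$ is the reflexive-transitive closure of $\mathcal{R}[\![e]\!]$. $e$ is deterministic if for all (possibly infinite) $S$, $\tau$, $\sigma$ with each $\sigma(p)$ the graph of a partial function, $\mathcal{R}[\![e]\!]^\sigma_\tau$ is the graph of a partial function. *)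

theory Defs
  imports Main
begin

datatype 't bexp = BFalse | BTrue | BTest 't | BOr "'t bexp" "'t bexp"
  | BAnd "'t bexp" "'t bexp" | BNot "'t bexp"

datatype ('p, 't) kat = KTest "'t bexp" | KAct 'p | KPlus "('p,'t) kat" "('p,'t) kat"
  | KSeq "('p,'t) kat" "('p,'t) kat" | KStar "('p,'t) kat"

fun bsem :: "'s set \<Rightarrow> ('t \<Rightarrow> 's set) \<Rightarrow> 't bexp \<Rightarrow> 's set" where
  "bsem S \<tau> BFalse = {}"
| "bsem S \<tau> BTrue = S"
| "bsem S \<tau> (BTest t) = \<tau> t"
| "bsem S \<tau> (BOr b c) = bsem S \<tau> b \<union> bsem S \<tau> c"
| "bsem S \<tau> (BAnd b c) = bsem S \<tau> b \<inter> bsem S \<tau> c"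
| "bsem S \<tau> (BNot b) = S - bsem S \<tau> b"

fun rsem :: "'s set \<Rightarrow> ('t \<Rightarrow> 's set) \<Rightarrow> ('p \<Rightarrow> ('s \<times> 's) set) \<Rightarrow> ('p,'t) kat \<Rightarrow> ('s \<times> 's) set" where
  "rsem S \<tau> \<sigma> (KTest b) = {(s, s) | s. s \<in> bsem S \<tau> b}"
| "rsem S \<tau> \<sigma> (KAct p) = \<sigma> p"
| "rsem S \<tau> \<sigma> (KPlus e f) = rsem S \<tau> \<sigma> e \<union> rsem S \<tau> \<sigma> f"
| "rsem S \<tau> \<sigma> (KSeq e f) = rsem S \<tau> \<sigma> e O rsem S \<tau> \<sigma> f"
| "rsem S \<tau> \<sigma> (KStar e) = Id_on S \<union> (rsem S \<tau> \<sigma> e)\<^sup>+"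

definition partial_fun_graph :: "('a \<times> 'b) set \<Rightarrow> bool" where
  "partial_fun_graph R \<longleftrightarrow> (\<forall>x y z. (x, y) \<in> R \<longrightarrow> (x, z) \<in> R \<longrightarrow> y = z)"

definition interp :: "'s set \<Rightarrow> ('t \<Rightarrow> 's set) \<Rightarrow> ('p \<Rightarrow> ('s \<times> 's) set) \<Rightarrow> bool" where
  "interp S \<tau> \<sigma> \<longleftrightarrow> (\<forall>t. \<tau> t \<subseteq> S) \<and> (\<forall>p. \<sigma> p \<subseteq> S \<times> S)"

text \<open>Determinism with respect to all state sets of type 's (any cardinality).
  Since 's is a free type variable of the theorem, non-determinism witnessed in
  any type is covered.\<close>
definition deterministic_in :: "'s itself \<Rightarrow> ('p,'t) kat \<Rightarrow> bool" where
  "deterministic_in _ e \<longleftrightarrow>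
     (\<forall>(S::'s set) \<tau> \<sigma>. interp S \<tau> \<sigma> \<and> (\<forall>p. partial_fun_graph (\<sigma> p))
        \<longrightarrow> partial_fun_graph (rsem S \<tau> \<sigma> e))"

end

theory Submission
  imports Defs
begin

text \<open>
  Every pair in the relational semantics is derived from finitely many states: a test or an
  action involves at most two, a composition glues two derivations at one intermediate state,
  and a pair of a transitive closure comes from a finite path. So if \<open>(x, y)\<close> and \<open>(x, z)\<close> with
  \<open>y \<noteq> z\<close> both lie in the semantics of \<open>e\<close>, restricting the interpretation to the finitely
  many states of both derivations keeps them, while the restricted actions stay partial
  functions. Renaming the finite state set injectively into \<open>nat\<close> commutes with the semantics.
\<close>

lemma partial_fun_graph_map_prod_image_iff:
  assumes inj: "inj_on g A" and R: "R \<subseteq> A \<times> A"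
  shows "partial_fun_graph (map_prod g g ` R) \<longleftrightarrow> partial_fun_graph R"
proof
  assume pf: "partial_fun_graph (map_prod g g ` R)"
  show "partial_fun_graph R"
    unfolding partial_fun_graph_def
  proof (intro allI impI)
    fix a b c
    assume ab: "(a, b) \<in> R" and ac: "(a, c) \<in> R"
    then have "(g a, g b) \<in> map_prod g g ` R" "(g a, g c) \<in> map_prod g g ` R"
      by (auto intro: map_prod_imageI)
    then have "g b = g c" by (rule pf[unfolded partial_fun_graph_def, rule_format])
    then show "b = c" using ab ac R inj_onD[OF inj] by blast
  qed
next
  assume pf: "partial_fun_graph R"
  show "partial_fun_graph (map_prod g g ` R)"
    unfolding partial_fun_graph_def
  proof (intro allI impI)
    fix u v w
    assume "(u, v) \<in> map_prod g g ` R" "(u, w) \<in> map_prod g g ` R"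
    then obtain a b a' c where "(a, b) \<in> R" "(a', c) \<in> R" "u = g a" "u = g a'" "v = g b" "w = g c"
      by auto
    moreover from this have "a = a'" using R inj_onD[OF inj] by blast
    ultimately show "v = w" using pf unfolding partial_fun_graph_def by blast
  qed
qed

lemma map_prod_image_relcomp:
  assumes inj: "inj_on g A" and "R \<subseteq> A \<times> A" and "Q \<subseteq> A \<times> A"
  shows "map_prod g g ` (R O Q) = map_prod g g ` R O map_prod g g ` Q"
proof
  show "map_prod g g ` R O map_prod g g ` Q \<subseteq> map_prod g g ` (R O Q)"
  proof clarify
    fix a b b' c
    assume "(a, b) \<in> R" "(b', c) \<in> Q" "g b = g b'"
    moreover from this have "b = b'" using assms inj_onD[OF inj] by blast
    ultimately show "(g a, g c) \<in> map_prod g g ` (R O Q)" by auto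
  qed
qed auto

lemma map_prod_image_trancl:
  assumes inj: "inj_on g A" and R: "R \<subseteq> A \<times> A"
  shows "map_prod g g ` R\<^sup>+ = (map_prod g g ` R)\<^sup>+"
proof
  show "map_prod g g ` R\<^sup>+ \<subseteq> (map_prod g g ` R)\<^sup>+"
  proof clarify
    fix a b
    assume "(a, b) \<in> R\<^sup>+"
    then show "(g a, g b) \<in> (map_prod g g ` R)\<^sup>+"
    proof (induction rule: trancl_induct)
      case (base b)
      then show ?case by (force intro: r_into_trancl)
    next
      case (step b c)
      then show ?case by (force intro: trancl_into_trancl)
    qed
  qed
next
  show "(map_prod g g ` R)\<^sup>+ \<subseteq> map_prod g g ` R\<^sup>+"
  proof clarify
    fix u v
    assume "(u, v) \<in> (map_prod g g ` R)\<^sup>+"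
    then show "(u, v) \<in> map_prod g g ` R\<^sup>+"
    proof (induction rule: trancl_induct)
      case (base v)
      then show ?case by auto
    next
      case (step v w)
      then obtain a b b' c where "(a, b) \<in> R\<^sup>+" "(b', c) \<in> R" "u = g a" "v = g b" "v = g b'" "w = g c"
        by auto
      moreover from this have "b = b'"
        using R trancl_subset_Sigma[OF R] inj_onD[OF inj] by blast
      ultimately show ?case by (auto intro: trancl_into_trancl)
    qed
  qed
qed

lemma bsem_subset: "(\<And>t. \<tau> t \<subseteq> S) \<Longrightarrow> bsem S \<tau> b \<subseteq> S"
  by (induction b) auto

lemma rsem_subset: "interp S \<tau> \<sigma> \<Longrightarrow> rsem S \<tau> \<sigma> e \<subseteq> S \<times> S"
proof (induction e)
  case (KTest b)
  then show ?case using bsem_subset[of \<tau> S b] by (auto simp: interp_def)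
next
  case (KStar e)
  then show ?case using trancl_subset_Sigma[of "rsem S \<tau> \<sigma> e" S] by auto
qed (auto simp: interp_def)

lemma bsem_image:
  assumes "inj_on g S" and "\<And>t. \<tau> t \<subseteq> S"
  shows "bsem (g ` S) (\<lambda>t. g ` \<tau> t) b = g ` bsem S \<tau> b"
  using assms by (induction b) (auto simp: bsem_subset inj_on_image_Int inj_on_image_set_diff image_Un)

lemma rsem_image:
  assumes inj: "inj_on g S" and I: "interp S \<tau> \<sigma>"
  shows "rsem (g ` S) (\<lambda>t. g ` \<tau> t) (\<lambda>p. map_prod g g ` \<sigma> p) e = map_prod g g ` rsem S \<tau> \<sigma> e"
proof (induction e)
  case (KTest b)
  have "bsem (g ` S) (\<lambda>t. g ` \<tau> t) b = g ` bsem S \<tau> b"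
    using bsem_image[OF inj] I by (auto simp: interp_def)
  then show ?case by auto
next
  case (KSeq e1 e2)
  then show ?case using map_prod_image_relcomp[OF inj rsem_subset[OF I] rsem_subset[OF I]] by simp
next
  case (KStar e)
  have "map_prod g g ` Id_on S = Id_on (g ` S)" by auto
  then show ?case using KStar map_prod_image_trancl[OF inj rsem_subset[OF I]] by (simp add: image_Un)
qed (auto simp: image_Un)

abbreviation rsem_restrict ::
    "'s set \<Rightarrow> ('t \<Rightarrow> 's set) \<Rightarrow> ('p \<Rightarrow> ('s \<times> 's) set) \<Rightarrow> ('p, 't) kat \<Rightarrow> ('s \<times> 's) set" where
  "rsem_restrict G \<tau> \<sigma> \<equiv> rsem G (\<lambda>t. \<tau> t \<inter> G) (\<lambda>p. \<sigma> p \<inter> G \<times> G)"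

lemma bsem_restrict: "bsem G (\<lambda>t. \<tau> t \<inter> G) b = bsem UNIV \<tau> b \<inter> G"
  by (induction b) auto

lemma rsem_restrict_mono: "G \<subseteq> H \<Longrightarrow> rsem_restrict G \<tau> \<sigma> e \<subseteq> rsem_restrict H \<tau> \<sigma> e"
proof (induction e)
  case (KSeq e1 e2)
  then show ?case by (simp add: relcomp_mono)
next
  case (KStar e)
  then show ?case by (auto intro: trancl_mono_subset[THEN subsetD])
qed (auto simp: bsem_restrict)

lemma rsem_restrict_mono_Un:
  "(x, y) \<in> rsem_restrict F \<tau> \<sigma> e \<Longrightarrow> (x, y) \<in> rsem_restrict (F \<union> F') \<tau> \<sigma> e"
  "(x, y) \<in> rsem_restrict F' \<tau> \<sigma> e \<Longrightarrow> (x, y) \<in> rsem_restrict (F \<union> F') \<tau> \<sigma> e"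
  using rsem_restrict_mono[of F "F \<union> F'"] rsem_restrict_mono[of F' "F \<union> F'"] by blast+

lemma rsem_restrict_finite_support:
  "(x, y) \<in> rsem_restrict S \<tau> \<sigma> e \<Longrightarrow> \<exists>F \<subseteq> S. finite F \<and> (x, y) \<in> rsem_restrict F \<tau> \<sigma> e"
proof (induction e arbitrary: x y)
  case (KTest b)
  then show ?case by (intro exI[of _ "{x}"]) (auto simp: bsem_restrict)
next
  case (KAct p)
  then show ?case by (intro exI[of _ "{x, y}"]) auto
next
  case (KPlus e1 e2)
  from KPlus.prems show ?case
    by (auto dest!: KPlus.IH)
next
  case (KSeq e1 e2)
  then obtain z where "(x, z) \<in> rsem_restrict S \<tau> \<sigma> e1" "(z, y) \<in> rsem_restrict S \<tau> \<sigma> e2"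
    by auto
  then obtain F1 F2 where "F1 \<subseteq> S" "finite F1" "(x, z) \<in> rsem_restrict F1 \<tau> \<sigma> e1"
    and "F2 \<subseteq> S" "finite F2" "(z, y) \<in> rsem_restrict F2 \<tau> \<sigma> e2"
    using KSeq.IH by meson
  then have "(x, y) \<in> rsem_restrict (F1 \<union> F2) \<tau> \<sigma> (KSeq e1 e2)"
    by (auto intro: rsem_restrict_mono_Un)
  with \<open>F1 \<subseteq> S\<close> \<open>F2 \<subseteq> S\<close> \<open>finite F1\<close> \<open>finite F2\<close> show ?case
    by (intro exI[of _ "F1 \<union> F2"]) simp
next
  case (KStar e)
  let ?R = "\<lambda>F. rsem_restrict F \<tau> \<sigma> e"
  have support: "\<exists>F \<subseteq> S. finite F \<and> (x, y) \<in> (?R F)\<^sup>+" if "(x, y) \<in> (?R S)\<^sup>+"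
    using that
  proof (induction rule: trancl_induct)
    case (base y)
    then obtain F where "F \<subseteq> S" "finite F" "(x, y) \<in> ?R F"
      using KStar.IH by blast
    then show ?case by (blast intro: r_into_trancl)
  next
    case (step y z)
    obtain F1 F2 where F: "F1 \<subseteq> S" "finite F1" "(x, y) \<in> (?R F1)\<^sup>+"
      "F2 \<subseteq> S" "finite F2" "(y, z) \<in> ?R F2"
      using step.IH KStar.IH[OF step.hyps(2)] by meson
    have "(?R F1)\<^sup>+ \<subseteq> (?R (F1 \<union> F2))\<^sup>+"
      by (intro trancl_mono_subset rsem_restrict_mono) simp
    with F(3) have "(x, y) \<in> (?R (F1 \<union> F2))\<^sup>+" ..
    moreover from F(6) have "(y, z) \<in> ?R (F1 \<union> F2)"
      by (rule rsem_restrict_mono_Un(2))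
    ultimately have "(x, z) \<in> (?R (F1 \<union> F2))\<^sup>+" ..
    moreover have "F1 \<union> F2 \<subseteq> S" "finite (F1 \<union> F2)" using F by auto
    ultimately show ?case by blast
  qed
  from KStar.prems consider "(x, y) \<in> Id_on S" | "(x, y) \<in> (?R S)\<^sup>+"
    by auto
  then show ?case
  proof cases
    case 1
    then have "x \<in> S" "y = x" by auto
    then show ?thesis by (intro exI[of _ "{x}"]) auto
  next
    case 2
    with support obtain F where "F \<subseteq> S" "finite F" "(x, y) \<in> (?R F)\<^sup>+"
      by blast
    then show ?thesis by (intro exI[of _ F]) simp
  qed
qed

lemma rsem_restrict_interp:
  assumes "interp S \<tau> \<sigma>"
  shows "rsem_restrict S \<tau> \<sigma> e = rsem S \<tau> \<sigma> e"
proof -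
  from assms have "(\<lambda>t. \<tau> t \<inter> S) = \<tau>" "(\<lambda>p. \<sigma> p \<inter> S \<times> S) = \<sigma>"
    unfolding interp_def by (simp_all add: fun_eq_iff Int_absorb2)
  then show ?thesis by simp
qed

definition nondet_witness ::
    "'s set \<Rightarrow> ('t \<Rightarrow> 's set) \<Rightarrow> ('p \<Rightarrow> ('s \<times> 's) set) \<Rightarrow> ('p, 't) kat \<Rightarrow> bool" where
  "nondet_witness S \<tau> \<sigma> e \<longleftrightarrow>
     interp S \<tau> \<sigma> \<and> (\<forall>p. partial_fun_graph (\<sigma> p)) \<and> \<not> partial_fun_graph (rsem S \<tau> \<sigma> e)"

lemma not_deterministic_in_iff:
  "\<not> deterministic_in TYPE('s) e \<longleftrightarrow> (\<exists>(S::'s set) \<tau> \<sigma>. nondet_witness S \<tau> \<sigma> e)"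
  unfolding deterministic_in_def nondet_witness_def by blast

lemma nondet_witness_finite:
  assumes "nondet_witness S \<tau> \<sigma> e"
  shows "\<exists>F \<subseteq> S. finite F \<and> nondet_witness F (\<lambda>t. \<tau> t \<inter> F) (\<lambda>p. \<sigma> p \<inter> F \<times> F) e"
proof -
  from assms have I: "interp S \<tau> \<sigma>" and pf: "\<forall>p. partial_fun_graph (\<sigma> p)"
    and npf: "\<not> partial_fun_graph (rsem S \<tau> \<sigma> e)"
    unfolding nondet_witness_def by auto
  from npf obtain x y z where "(x, y) \<in> rsem S \<tau> \<sigma> e" "(x, z) \<in> rsem S \<tau> \<sigma> e" "y \<noteq> z"
    unfolding partial_fun_graph_def by blast
  then have xy: "(x, y) \<in> rsem_restrict S \<tau> \<sigma> e" and xz: "(x, z) \<in> rsem_restrict S \<tau> \<sigma> e"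
    by (simp_all add: rsem_restrict_interp[OF I])
  obtain F1 where F1: "F1 \<subseteq> S" "finite F1" "(x, y) \<in> rsem_restrict F1 \<tau> \<sigma> e"
    using rsem_restrict_finite_support[OF xy] by blast
  obtain F2 where F2: "F2 \<subseteq> S" "finite F2" "(x, z) \<in> rsem_restrict F2 \<tau> \<sigma> e"
    using rsem_restrict_finite_support[OF xz] by blast
  let ?F = "F1 \<union> F2"
  have "(x, y) \<in> rsem_restrict ?F \<tau> \<sigma> e"
    using F1(3) by (rule rsem_restrict_mono_Un(1))
  moreover have "(x, z) \<in> rsem_restrict ?F \<tau> \<sigma> e"
    using F2(3) by (rule rsem_restrict_mono_Un(2))
  ultimately have "\<not> partial_fun_graph (rsem_restrict ?F \<tau> \<sigma> e)"
    using \<open>y \<noteq> z\<close> unfolding partial_fun_graph_def by blast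
  moreover have "interp ?F (\<lambda>t. \<tau> t \<inter> ?F) (\<lambda>p. \<sigma> p \<inter> ?F \<times> ?F)"
    unfolding interp_def by blast
  moreover have "partial_fun_graph (\<sigma> p \<inter> ?F \<times> ?F)" for p
    using pf unfolding partial_fun_graph_def by blast
  ultimately have "nondet_witness ?F (\<lambda>t. \<tau> t \<inter> ?F) (\<lambda>p. \<sigma> p \<inter> ?F \<times> ?F) e"
    unfolding nondet_witness_def by blast
  moreover have "?F \<subseteq> S" "finite ?F" using F1 F2 by auto
  ultimately show ?thesis by blast
qed

lemma nondet_witness_image:
  assumes "nondet_witness S \<tau> \<sigma> e" and inj: "inj_on g S"
  shows "nondet_witness (g ` S) (\<lambda>t. g ` \<tau> t) (\<lambda>p. map_prod g g ` \<sigma> p) e"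
proof -
  from assms have I: "interp S \<tau> \<sigma>" and pf: "\<forall>p. partial_fun_graph (\<sigma> p)"
    and npf: "\<not> partial_fun_graph (rsem S \<tau> \<sigma> e)"
    unfolding nondet_witness_def by auto
  have \<sigma>S: "\<sigma> p \<subseteq> S \<times> S" for p
    using I unfolding interp_def by blast
  have "interp (g ` S) (\<lambda>t. g ` \<tau> t) (\<lambda>p. map_prod g g ` \<sigma> p)"
    using I image_mono[OF \<sigma>S, of "map_prod g g"] unfolding interp_def
    by (auto simp: image_mono map_prod_surj_on)
  moreover have "partial_fun_graph (map_prod g g ` \<sigma> p)" for p
    using pf partial_fun_graph_map_prod_image_iff[OF inj \<sigma>S] by simp
  moreover have "\<not> partial_fun_graph (rsem (g ` S) (\<lambda>t. g ` \<tau> t) (\<lambda>p. map_prod g g ` \<sigma> p) e)"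
    using npf partial_fun_graph_map_prod_image_iff[OF inj rsem_subset[OF I]]
    by (simp add: rsem_image[OF inj I])
  ultimately show ?thesis
    unfolding nondet_witness_def by blast
qed

theorem proposition4p5:
  fixes e :: "('p::finite, 't::finite) kat"
  assumes "\<not> deterministic_in TYPE('s) e"
  shows "\<exists>(S::nat set) \<tau> \<sigma>. finite S \<and> interp S \<tau> \<sigma> \<and> (\<forall>p. partial_fun_graph (\<sigma> p))
           \<and> \<not> partial_fun_graph (rsem S \<tau> \<sigma> e)"
proof -
  obtain S :: "'s set" and \<tau> \<sigma> where "nondet_witness S \<tau> \<sigma> e"
    using assms unfolding not_deterministic_in_iff by blast
  then obtain F where "finite F" and W: "nondet_witness F (\<lambda>t. \<tau> t \<inter> F) (\<lambda>p. \<sigma> p \<inter> F \<times> F) e"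
    using nondet_witness_finite by blast
  obtain g :: "'s \<Rightarrow> nat" where "inj_on g F"
    using finite_imp_inj_to_nat_seg[OF \<open>finite F\<close>] by blast
  with W have "nondet_witness (g ` F) (\<lambda>t. g ` (\<tau> t \<inter> F)) (\<lambda>p. map_prod g g ` (\<sigma> p \<inter> F \<times> F)) e"
    by (rule nondet_witness_image)
  with \<open>finite F\<close> show ?thesis
    unfolding nondet_witness_def by (blast intro: finite_imageI)
qed

end
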